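(* Let $\gamma>-1/2$ and for $a\in\mathbb{R}$ define \[ T(a)={}_1F_1(1+\gamma;2\gamma+1;-ia)\,{}_1F_1(2+\gamma;2\gamma+2;ia)(1+\gamma)-{}_1F_1(\gamma;2\gamma+1;-ia)\,{}_1F_1(1+\gamma;2\gamma+2;ia)\,\gamma . \] Then $T(a)\neq0$ for every $a\in\mathbb{R}$.
   Context: ${}_1F_1(\alpha;\beta;z)=\sum_{k\ge0}\frac{(\alpha)_k}{(\beta)_k}\frac{z^k}{k!}$ is the confluent hypergeometric function, with $(v)_k$ the rising factorial. *)

theory Defs
  imports "HOL-Analysis.Analysis"
begin

definition hyp1F1 :: "complex \<Rightarrow> complex \<Rightarrow> complex \<Rightarrow> complex" where
  "hyp1F1 \<alpha> \<beta> z = (\<Sum>k. pochhammer \<alpha> k / pochhammer \<beta> k * z ^ k / fact k)"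

end

theory Submission
  imports Defs
begin

(*
  Put b = 2 gamma + 1, u = 1F1(gamma; b; .), v = 1F1(gamma + 1; b + 1; .) and
  p = 1F1(gamma + 1; b; .) = u + z v / b.  By the contiguous relations of 1F1 the quantity T(a)
  is E(i a), where E(z) = p(-z) (b u(z) + (z - gamma) v(z)) - gamma u(-z) v(z).  From
  u' = (gamma / b) v and z v' = b (u - v) + z v one computes, using b = 2 gamma + 1, that the
  operator F |-> b F + z F' annihilates K(z) = u(-z) v(z) - p(z) v(-z) and maps E to
  b u(z) u(-z) + z K(z).  Along a ray z = t w this operator is t^(1 - b) d/dt (t^b F(t w)).
  Hence K = 0, and on the imaginary axis, where u(-z) is the conjugate of u(z), the function
  t^b Re E(t w) is nondecreasing in t; as E(0) = 1, Re E is positive there.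
*)

definition kummer_coeff :: "real \<Rightarrow> real \<Rightarrow> nat \<Rightarrow> real" where
  "kummer_coeff A B n = pochhammer A n / pochhammer B n / fact n"

lemma kummer_coeff_0 [simp]: "kummer_coeff A B 0 = 1"
  by (simp add: kummer_coeff_def)

lemma kummer_coeff_rec:
  assumes "B > 0"
  shows "real (Suc n) * kummer_coeff A B (Suc n) = A / B * kummer_coeff (A + 1) (B + 1) n"
proof -
  have "pochhammer (B + 1) n > 0"
    using assms by (simp add: pochhammer_pos)
  with assms show ?thesis
    unfolding kummer_coeff_def pochhammer_rec[of A] pochhammer_rec[of B] fact_Suc
    by (simp add: field_simps del: of_nat_Suc)
qed

lemma kummer_coeff_rec':
  assumes "B > 0"
  shows "kummer_coeff A B (Suc m) = (A + m) / ((B + m) * (m + 1)) * kummer_coeff A B m"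
proof -
  have "pochhammer B m > 0"
    using assms by (simp add: pochhammer_pos)
  with assms show ?thesis
    unfolding kummer_coeff_def pochhammer_rec' fact_Suc
    by (simp add: field_simps del: of_nat_Suc)
qed

lemma kummer_coeff_contiguous_a:
  assumes "B > 0"
  shows "kummer_coeff (A + 1) B (Suc m) = kummer_coeff A B (Suc m) + kummer_coeff (A + 1) (B + 1) m / B"
proof -
  have "pochhammer (B + 1) m > 0"
    using assms by (simp add: pochhammer_pos)
  with assms show ?thesis
    unfolding kummer_coeff_def pochhammer_rec[of A] pochhammer_rec[of B] pochhammer_rec'[of "A + 1"] fact_Suc
    by (simp add: field_simps del: of_nat_Suc) (simp add: algebra_simps)
qed

lemma kummer_coeff_contiguous_ab:
  assumes "B > 0"
  shows "(A + 1) * kummer_coeff (A + 2) (B + 1) (Suc m)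
    = B * kummer_coeff A B (Suc m) + (A + 1 - B) * kummer_coeff (A + 1) (B + 1) (Suc m)
      + kummer_coeff (A + 1) (B + 1) m"
proof -
  define c where "c = kummer_coeff (A + 1) (B + 1) m"
  define k where "k = real m + 1"
  define l where "l = B + k"
  have kl: "k > 0" "l > 0"
    using assms by (simp_all add: k_def l_def add_pos_nonneg)
  have "(A + 1) * kummer_coeff (A + 2) (B + 1) (Suc m)
      = (A + 1 + k) / (l * k) * ((A + 1) * kummer_coeff (A + 2) (B + 1) m)"
    using assms by (simp add: kummer_coeff_rec'[of "B + 1"] k_def l_def add_ac mult_ac)
  also have "(A + 1) * kummer_coeff (A + 2) (B + 1) m = (A + k) * c"
    using pochhammer_rec[of "A + 1" m] pochhammer_rec'[of "A + 1" m]
    by (simp add: c_def k_def kummer_coeff_def add_ac)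
  finally have coeff_A2:
    "(A + 1) * kummer_coeff (A + 2) (B + 1) (Suc m) = (A + 1 + k) / (l * k) * ((A + k) * c)" .
  have "k * kummer_coeff A B (Suc m) = A / B * c"
    using kummer_coeff_rec[OF assms, of m A] by (simp add: c_def k_def add_ac)
  then have coeff_A: "kummer_coeff A B (Suc m) = A / (B * k) * c"
    using assms kl(1) by (simp add: field_simps)
  have coeff_A1: "kummer_coeff (A + 1) (B + 1) (Suc m) = (A + k) / (l * k) * c"
    using assms by (simp add: c_def k_def l_def kummer_coeff_rec' add_ac)
  show ?thesis
    unfolding coeff_A coeff_A1 coeff_A2 c_def[symmetric] using assms kl
    by (simp add: field_simps) (simp add: l_def algebra_simps)
qed

lemma abs_pochhammer_le:
  fixes A B :: real
  assumes "B > 0"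
  shows "\<bar>pochhammer A n\<bar> \<le> (\<bar>A\<bar> / B + 1) ^ n * pochhammer B n"
proof (induction n)
  case 0
  then show ?case by simp
next
  case (Suc n)
  have "\<bar>A + n\<bar> \<le> \<bar>A\<bar> + n"
    by simp
  also have "\<dots> \<le> (\<bar>A\<bar> / B + 1) * (B + n)"
    using assms by (simp add: field_simps)
  finally have "\<bar>A + n\<bar> \<le> (\<bar>A\<bar> / B + 1) * (B + n)" .
  then have "\<bar>pochhammer A n\<bar> * \<bar>A + n\<bar>
      \<le> (\<bar>A\<bar> / B + 1) ^ n * pochhammer B n * ((\<bar>A\<bar> / B + 1) * (B + n))"
    using Suc.IH by (intro mult_mono) auto
  then show ?case
    by (simp add: pochhammer_rec' abs_mult mult_ac)
qed

lemma hyp1F1_of_real: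
  "hyp1F1 (of_real A) (of_real B) z = (\<Sum>n. of_real (kummer_coeff A B n) * z ^ n)"
  by (simp add: hyp1F1_def kummer_coeff_def pochhammer_of_real)

lemma summable_kummer_series:
  assumes "B > 0"
  shows "summable (\<lambda>n. of_real (kummer_coeff A B n) * z ^ n :: complex)"
proof (rule summable_comparison_test')
  show "summable (\<lambda>n. inverse (fact n) * ((\<bar>A\<bar> / B + 1) * norm z) ^ n)"
    by (rule summable_exp)
  fix n
  have "\<bar>kummer_coeff A B n\<bar> \<le> (\<bar>A\<bar> / B + 1) ^ n / fact n"
    using abs_pochhammer_le[OF assms, of A n] pochhammer_pos[OF assms, of n]
    by (simp add: kummer_coeff_def divide_le_eq)
  then have "\<bar>kummer_coeff A B n\<bar> * norm z ^ n \<le> (\<bar>A\<bar> / B + 1) ^ n / fact n * norm z ^ n"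
    by (rule mult_right_mono) simp
  then show "norm (of_real (kummer_coeff A B n) * z ^ n)
      \<le> inverse (fact n) * ((\<bar>A\<bar> / B + 1) * norm z) ^ n"
    by (simp add: norm_mult norm_power power_mult_distrib divide_inverse mult_ac)
qed

lemma hyp1F1_sums:
  assumes "B > 0"
  shows "(\<lambda>n. of_real (kummer_coeff A B n) * z ^ n) sums hyp1F1 (of_real A) (of_real B) z"
  unfolding hyp1F1_of_real by (rule summable_sums[OF summable_kummer_series[OF assms]])

lemma hyp1F1_0: "hyp1F1 \<alpha> \<beta> 0 = 1"
  using powser_zero[of "\<lambda>k. pochhammer \<alpha> k / pochhammer \<beta> k / fact k"]
  by (simp add: hyp1F1_def)

lemma hyp1F1_cnj:
  assumes "B > 0"
  shows "hyp1F1 (of_real A) (of_real B) (cnj z) = cnj (hyp1F1 (of_real A) (of_real B) z)"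
proof -
  have "(\<lambda>n. of_real (kummer_coeff A B n) * cnj z ^ n) sums cnj (hyp1F1 (of_real A) (of_real B) z)"
    using sums_cnj[THEN iffD2, OF hyp1F1_sums[OF assms]] by simp
  then show ?thesis
    using hyp1F1_sums[OF assms] sums_unique2 by blast
qed

lemma hyp1F1_has_field_derivative:
  assumes "B > 0"
  shows "(hyp1F1 (of_real A) (of_real B) has_field_derivative
           of_real (A / B) * hyp1F1 (of_real (A + 1)) (of_real (B + 1)) z) (at z)"
proof -
  have diffs_eq: "diffs (\<lambda>n. of_real (kummer_coeff A B n)) n
      = (of_real (A / B) * of_real (kummer_coeff (A + 1) (B + 1) n) :: complex)" for n
  proof -
    have "diffs (\<lambda>n. of_real (kummer_coeff A B n)) n
        = (of_real (real (Suc n) * kummer_coeff A B (Suc n)) :: complex)"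
      by (simp add: diffs_def)
    also have "\<dots> = of_real (A / B * kummer_coeff (A + 1) (B + 1) n)"
      by (simp only: kummer_coeff_rec[OF assms])
    finally show ?thesis
      by simp
  qed
  have "(\<lambda>n. diffs (\<lambda>n. of_real (kummer_coeff A B n)) n * z ^ n) sums
      (of_real (A / B) * hyp1F1 (of_real (A + 1)) (of_real (B + 1)) z)"
    unfolding diffs_eq mult.assoc using assms by (intro sums_mult hyp1F1_sums) simp
  moreover have "((\<lambda>z. \<Sum>n. of_real (kummer_coeff A B n) * z ^ n) has_field_derivative
      (\<Sum>n. diffs (\<lambda>n. of_real (kummer_coeff A B n)) n * z ^ n)) (at z)"
    using assms by (intro termdiffs_strong_converges_everywhere summable_kummer_series)
  ultimately show ?thesis
    unfolding hyp1F1_of_real[abs_def] by (simp add: sums_iff)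
qed

lemma powser_sums_shift:
  fixes c :: "nat \<Rightarrow> 'a :: real_normed_field"
  assumes "(\<lambda>n. c n * z ^ n) sums s"
  shows "(\<lambda>n. (if n = 0 then 0 else c (n - 1)) * z ^ n) sums (z * s)"
proof -
  have "(\<lambda>n. (if Suc n = 0 then 0 else c (Suc n - 1)) * z ^ Suc n) sums (z * s)"
    using sums_mult[OF assms, of z] by (simp add: mult_ac)
  then show ?thesis
    using sums_Suc_iff[of "\<lambda>n. (if n = 0 then 0 else c (n - 1)) * z ^ n"] by simp
qed

lemma hyp1F1_contiguous_sums:
  fixes \<alpha> \<beta> \<delta> :: real
  assumes "B > 0"
  shows "(\<lambda>n. of_real (\<alpha> * kummer_coeff A B n + \<beta> * kummer_coeff (A + 1) (B + 1) n
            + \<delta> * (if n = 0 then 0 else kummer_coeff (A + 1) (B + 1) (n - 1))) * z ^ n)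
    sums (of_real \<alpha> * hyp1F1 (of_real A) (of_real B) z
          + of_real \<beta> * hyp1F1 (of_real (A + 1)) (of_real (B + 1)) z
          + of_real \<delta> * (z * hyp1F1 (of_real (A + 1)) (of_real (B + 1)) z))"
proof -
  have "(\<lambda>n. of_real \<alpha> * (of_real (kummer_coeff A B n) * z ^ n)
            + of_real \<beta> * (of_real (kummer_coeff (A + 1) (B + 1) n) * z ^ n)
            + of_real \<delta> * ((if n = 0 then 0 else of_real (kummer_coeff (A + 1) (B + 1) (n - 1))) * z ^ n))
    sums (of_real \<alpha> * hyp1F1 (of_real A) (of_real B) z
          + of_real \<beta> * hyp1F1 (of_real (A + 1)) (of_real (B + 1)) z
          + of_real \<delta> * (z * hyp1F1 (of_real (A + 1)) (of_real (B + 1)) z))"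
    using assms by (intro sums_add sums_mult powser_sums_shift hyp1F1_sums) simp_all
  moreover have "(\<lambda>n. of_real \<alpha> * (of_real (kummer_coeff A B n) * z ^ n)
            + of_real \<beta> * (of_real (kummer_coeff (A + 1) (B + 1) n) * z ^ n)
            + of_real \<delta> * ((if n = 0 then 0 else of_real (kummer_coeff (A + 1) (B + 1) (n - 1))) * z ^ n))
    = (\<lambda>n. of_real (\<alpha> * kummer_coeff A B n + \<beta> * kummer_coeff (A + 1) (B + 1) n
            + \<delta> * (if n = 0 then 0 else kummer_coeff (A + 1) (B + 1) (n - 1))) * z ^ n)"
    by (rule ext) (simp add: algebra_simps)
  ultimately show ?thesis
    by simp
qed

lemma hyp1F1_contiguous_a:
  assumes "B > 0"
  shows "hyp1F1 (of_real (A + 1)) (of_real B) z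
    = hyp1F1 (of_real A) (of_real B) z + z * hyp1F1 (of_real (A + 1)) (of_real (B + 1)) z / of_real B"
proof -
  have "kummer_coeff (A + 1) B n = 1 * kummer_coeff A B n + 0 * kummer_coeff (A + 1) (B + 1) n
      + 1 / B * (if n = 0 then 0 else kummer_coeff (A + 1) (B + 1) (n - 1))" for n
    using assms by (cases n) (simp_all add: kummer_coeff_contiguous_a)
  then have "(\<lambda>n. of_real (kummer_coeff (A + 1) B n) * z ^ n) sums
      (of_real 1 * hyp1F1 (of_real A) (of_real B) z
       + of_real 0 * hyp1F1 (of_real (A + 1)) (of_real (B + 1)) z
       + of_real (1 / B) * (z * hyp1F1 (of_real (A + 1)) (of_real (B + 1)) z))"
    by (simp only:) (rule hyp1F1_contiguous_sums[OF assms])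
  then show ?thesis
    using hyp1F1_sums[OF assms, of "A + 1" z] sums_unique2 by (fastforce simp: field_simps)
qed

lemma hyp1F1_contiguous_ab:
  assumes "B > 0"
  shows "of_real (A + 1) * hyp1F1 (of_real (A + 2)) (of_real (B + 1)) z
    = of_real B * hyp1F1 (of_real A) (of_real B) z
      + (of_real (A + 1 - B) + z) * hyp1F1 (of_real (A + 1)) (of_real (B + 1)) z"
proof -
  have "(A + 1) * kummer_coeff (A + 2) (B + 1) n
      = B * kummer_coeff A B n + (A + 1 - B) * kummer_coeff (A + 1) (B + 1) n
        + 1 * (if n = 0 then 0 else kummer_coeff (A + 1) (B + 1) (n - 1))" for n
    using assms by (cases n) (simp_all add: kummer_coeff_contiguous_ab)
  then have "(\<lambda>n. of_real ((A + 1) * kummer_coeff (A + 2) (B + 1) n) * z ^ n) sums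
      (of_real B * hyp1F1 (of_real A) (of_real B) z
       + of_real (A + 1 - B) * hyp1F1 (of_real (A + 1)) (of_real (B + 1)) z
       + of_real 1 * (z * hyp1F1 (of_real (A + 1)) (of_real (B + 1)) z))"
    by (simp only:) (rule hyp1F1_contiguous_sums[OF assms])
  moreover have "(\<lambda>n. of_real ((A + 1) * kummer_coeff (A + 2) (B + 1) n) * z ^ n) sums
      (of_real (A + 1) * hyp1F1 (of_real (A + 2)) (of_real (B + 1)) z)"
    using sums_mult[OF hyp1F1_sums[of "B + 1" "A + 2" z], of "of_real (A + 1)"] assms
    by (simp add: mult.assoc)
  ultimately show ?thesis
    using sums_unique2 by (fastforce simp: algebra_simps)
qed

lemma hyp1F1_euler_operator:
  assumes "B > 0"
  shows "z * deriv (hyp1F1 (of_real A) (of_real B)) z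
    = of_real A * (hyp1F1 (of_real (A + 1)) (of_real B) z - hyp1F1 (of_real A) (of_real B) z)"
  unfolding DERIV_imp_deriv[OF hyp1F1_has_field_derivative[OF assms]] hyp1F1_contiguous_a[OF assms]
  using assms by (simp add: field_simps)

lemma has_vector_derivative_powr_scaleR_ray:
  fixes F :: "complex \<Rightarrow> complex"
  assumes "F holomorphic_on UNIV" and "x > 0"
  shows "((\<lambda>t. t powr b *\<^sub>R F (t *\<^sub>R w)) has_vector_derivative
           x powr (b - 1) *\<^sub>R (of_real b * F (x *\<^sub>R w) + (x *\<^sub>R w) * deriv F (x *\<^sub>R w))) (at x)"
proof -
  have "((\<lambda>t. t *\<^sub>R w) has_vector_derivative w) (at x)"
    using has_vector_derivative_scaleR[OF DERIV_ident has_vector_derivative_const] by simp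
  then have "((\<lambda>t. F (t *\<^sub>R w)) has_vector_derivative w * deriv F (x *\<^sub>R w)) (at x)"
    using field_vector_diff_chain_at[OF _ holomorphic_derivI[OF assms(1)]] by (simp add: o_def)
  then have "((\<lambda>t. t powr b *\<^sub>R F (t *\<^sub>R w)) has_vector_derivative
      x powr b *\<^sub>R (w * deriv F (x *\<^sub>R w)) + (b * x powr (b - 1)) *\<^sub>R F (x *\<^sub>R w)) (at x)"
    by (intro has_vector_derivative_scaleR has_real_derivative_powr assms(2))
  moreover have "x powr b = x powr (b - 1) * x"
    using assms(2) by (simp add: powr_diff)
  ultimately show ?thesis
    by (simp add: scaleR_conv_of_real algebra_simps)
qed

lemma holomorphic_ray_eq_0:
  fixes F :: "complex \<Rightarrow> complex"
  assumes holo: "F holomorphic_on UNIV" and "b > 0"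
    and euler: "\<And>t. t > 0 \<Longrightarrow> of_real b * F (t *\<^sub>R w) + (t *\<^sub>R w) * deriv F (t *\<^sub>R w) = 0"
    and "x > 0"
  shows "F (x *\<^sub>R w) = 0"
proof -
  define G where "G t = t powr b *\<^sub>R F (t *\<^sub>R w)" for t
  have "continuous_on UNIV F"
    using holo by (simp add: holomorphic_on_imp_continuous_on)
  then have "continuous_on {0..x} (\<lambda>t. F (t *\<^sub>R w))"
    by (rule continuous_on_compose2) (intro continuous_intros, simp)
  moreover have "continuous_on {0..x} (\<lambda>t. t powr b)"
    using \<open>b > 0\<close> by (intro continuous_on_powr' continuous_on_id continuous_on_const) auto
  ultimately have "continuous_on {0..x} G"
    unfolding G_def by (rule continuous_on_scaleR[rotated])
  moreover have "(G has_derivative (\<lambda>h. 0)) (at t within {0..x})" if "t \<in> {0..x} - {0, x}" for t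
  proof -
    have "(G has_vector_derivative 0) (at t)"
      using has_vector_derivative_powr_scaleR_ray[OF holo, of t b w] euler[of t] that
      unfolding G_def by simp
    then show ?thesis
      by (simp add: has_vector_derivative_def has_derivative_at_withinI)
  qed
  ultimately have "G x = G 0"
    using \<open>x > 0\<close> by (intro has_derivative_zero_unique_strong_interval[of "{0, x}"]) auto
  then show ?thesis
    using \<open>x > 0\<close> by (simp add: G_def)
qed

lemma holomorphic_ray_Re_pos:
  fixes F :: "complex \<Rightarrow> complex"
  assumes holo: "F holomorphic_on UNIV" and "Re (F 0) > 0"
    and euler: "\<And>t. t > 0 \<Longrightarrow> Re (of_real b * F (t *\<^sub>R w) + (t *\<^sub>R w) * deriv F (t *\<^sub>R w)) \<ge> 0"
    and "x > 0"
  shows "Re (F (x *\<^sub>R w)) > 0"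
proof -
  define \<psi> where "\<psi> t = t powr b * Re (F (t *\<^sub>R w))" for t
  have "continuous_on UNIV F"
    using holo by (simp add: holomorphic_on_imp_continuous_on)
  then have "continuous_on UNIV (\<lambda>t::real. F (t *\<^sub>R w))"
    by (rule continuous_on_compose2) (intro continuous_intros, simp)
  then have "continuous_on UNIV (\<lambda>t::real. Re (F (t *\<^sub>R w)))"
    by (rule continuous_on_Re)
  then have "((\<lambda>t. Re (F (t *\<^sub>R w))) \<longlongrightarrow> Re (F (0 *\<^sub>R w))) (at 0 within {0<..})"
    unfolding continuous_on_def by (blast intro: tendsto_within_subset)
  then have "((\<lambda>t. Re (F (t *\<^sub>R w))) \<longlongrightarrow> Re (F 0)) (at_right 0)"
    by simp
  then have "\<forall>\<^sub>F t in at_right 0. Re (F (t *\<^sub>R w)) > 0 \<and> t \<in> {0<..<x}"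
    using \<open>Re (F 0) > 0\<close> \<open>x > 0\<close>
    by (intro eventually_conj order_tendstoD(1) eventually_at_right_real)
  then have "\<exists>y. Re (F (y *\<^sub>R w)) > 0 \<and> y \<in> {0<..<x}"
    by (rule eventually_happens'[rotated]) simp
  then obtain y where y: "0 < y" "y \<le> x" "Re (F (y *\<^sub>R w)) > 0"
    by auto
  have "\<psi> y \<le> \<psi> x"
  proof (rule DERIV_nonneg_imp_nondecreasing[OF \<open>y \<le> x\<close>])
    fix t assume "y \<le> t" "t \<le> x"
    then have "t > 0" using y by simp
    have "((\<lambda>t. Re (t powr b *\<^sub>R F (t *\<^sub>R w))) has_real_derivative
        Re (t powr (b - 1) *\<^sub>R (of_real b * F (t *\<^sub>R w) + (t *\<^sub>R w) * deriv F (t *\<^sub>R w)))) (at t)"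
      by (rule has_field_derivative_Re has_vector_derivative_powr_scaleR_ray holo \<open>t > 0\<close>)+
    moreover have "Re (t powr (b - 1) *\<^sub>R (of_real b * F (t *\<^sub>R w) + (t *\<^sub>R w) * deriv F (t *\<^sub>R w))) \<ge> 0"
      using euler[OF \<open>t > 0\<close>] by simp
    ultimately show "\<exists>d. (\<psi> has_real_derivative d) (at t) \<and> d \<ge> 0"
      unfolding \<psi>_def by auto
  qed
  moreover have "\<psi> y > 0"
    using y by (simp add: \<psi>_def)
  ultimately have "\<psi> x > 0"
    by linarith
  then show ?thesis
    using \<open>x > 0\<close> by (simp add: \<psi>_def zero_less_mult_iff)
qed

locale kummer_pair =
  fixes \<gamma> b :: real and u v :: "complex \<Rightarrow> complex"
  assumes b_eq: "b = 2 * \<gamma> + 1"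
    and b_pos: "b > 0"
    and u_has_field_derivative: "\<And>z. (u has_field_derivative of_real (\<gamma> / b) * v z) (at z)"
    and v_holomorphic: "v holomorphic_on UNIV"
    and v_euler: "\<And>z. z * deriv v z = of_real b * (u z - v z) + z * v z"
    and u_0: "u 0 = 1"
    and u_cnj: "\<And>z. u (cnj z) = cnj (u z)"
begin

definition K :: "complex \<Rightarrow> complex" where
  "K z = u (- z) * v z - (u z + z * v z / of_real b) * v (- z)"

(* By the contiguous relations, E (\<i> * a) is the expression of the theorem. *)
definition E :: "complex \<Rightarrow> complex" where
  "E z = (u (- z) - z * v (- z) / of_real b) * (of_real b * u z + (z - of_real \<gamma>) * v z)
         - of_real \<gamma> * u (- z) * v z"

lemma b_nonzero [simp]: "b \<noteq> 0"
  using b_pos by simp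

lemma v_has_field_derivative: "(v has_field_derivative deriv v z) (at z)"
  using v_holomorphic by (rule holomorphic_derivI) simp_all

lemma v_0: "v 0 = 1"
  using v_euler[of 0] b_pos u_0 by simp

lemma K_has_field_derivative:
  "(K has_field_derivative
      of_real (\<gamma> / b) * v (- z) * v z * (- 1) + u (- z) * deriv v z
      - (of_real (\<gamma> / b) * v z + (v z + z * deriv v z) / of_real b) * v (- z)
      - (u z + z * v z / of_real b) * (deriv v (- z) * (- 1))) (at z)"
  unfolding K_def[abs_def]
  by (rule derivative_eq_intros refl
      DERIV_chain2[OF u_has_field_derivative] DERIV_chain2[OF v_has_field_derivative] | simp)+

lemma deriv_v_eq:
  "z \<noteq> 0 \<Longrightarrow> deriv v z = (of_real b * (u z - v z) + z * v z) / z"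
  using v_euler[of z] by (simp add: field_simps)

lemma of_real_b_eq: "(of_real b :: complex) = 2 * of_real \<gamma> + 1"
  by (simp add: b_eq)

lemma K_euler: "of_real b * K z + z * deriv K z = 0"
proof (cases "z = 0")
  case True
  then show ?thesis
    by (simp add: K_def)
next
  case False
  then show ?thesis
    unfolding DERIV_imp_deriv[OF K_has_field_derivative] K_def
    by (simp add: deriv_v_eq field_simps) (simp add: of_real_b_eq algebra_simps)
qed

lemma K_holomorphic: "K holomorphic_on UNIV"
  using K_has_field_derivative by (auto simp: holomorphic_on_def field_differentiable_def)

lemma K_eq_0: "K z = 0"
proof (cases "z = 0")
  case True
  then show ?thesis
    by (simp add: K_def)
next
  case False
  then have "K (norm z *\<^sub>R sgn z) = 0"
    by (intro holomorphic_ray_eq_0[OF K_holomorphic b_pos K_euler]) simp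
  with False show ?thesis
    by (simp add: scaleR_conv_of_real sgn_eq)
qed

lemma E_has_field_derivative:
  "(E has_field_derivative
      (- of_real (\<gamma> / b) * v (- z) - (v (- z) - z * deriv v (- z)) / of_real b)
        * (of_real b * u z + (z - of_real \<gamma>) * v z)
      + (u (- z) - z * v (- z) / of_real b)
        * (of_real b * of_real (\<gamma> / b) * v z + v z + (z - of_real \<gamma>) * deriv v z)
      - of_real \<gamma> * (- of_real (\<gamma> / b) * v (- z) * v z + u (- z) * deriv v z)) (at z)"
  unfolding E_def[abs_def]
  by (rule derivative_eq_intros refl
      DERIV_chain2[OF u_has_field_derivative] DERIV_chain2[OF v_has_field_derivative] | simp)+
    (simp add: algebra_simps)

lemma E_euler: "of_real b * E z + z * deriv E z = of_real b * u z * u (- z)"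
proof (cases "z = 0")
  case True
  then show ?thesis
    by (simp add: E_def u_0 v_0 of_real_b_eq)
next
  case False
  have "of_real b * E z + z * deriv E z = of_real b * u z * u (- z) + z * K z"
    unfolding DERIV_imp_deriv[OF E_has_field_derivative] E_def K_def using False
    by (simp add: deriv_v_eq field_simps) (simp add: of_real_b_eq algebra_simps)
  then show ?thesis
    by (simp add: K_eq_0)
qed

lemma E_holomorphic: "E holomorphic_on UNIV"
  using E_has_field_derivative by (auto simp: holomorphic_on_def field_differentiable_def)

lemma E_0: "E 0 = 1"
  by (simp add: E_def u_0 v_0 of_real_b_eq)

lemma Re_E_imaginary_pos:
  assumes "Re w = 0" and "x > 0"
  shows "Re (E (x *\<^sub>R w)) > 0"
proof (rule holomorphic_ray_Re_pos[OF E_holomorphic _ _ \<open>x > 0\<close>])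
  fix t :: real
  have "cnj (t *\<^sub>R w) = - (t *\<^sub>R w)"
    using assms(1) by (simp add: complex_eq_iff)
  then have "u (- (t *\<^sub>R w)) = cnj (u (t *\<^sub>R w))"
    by (metis u_cnj)
  then show "Re (of_real b * E (t *\<^sub>R w) + (t *\<^sub>R w) * deriv E (t *\<^sub>R w)) \<ge> 0"
    unfolding E_euler using b_pos by (simp add: mult.assoc flip: complex_norm_square)
qed (simp add: E_0)

lemma E_imaginary_nonzero: "E (\<i> * of_real y) \<noteq> 0"
proof (cases "y = 0")
  case True
  then show ?thesis
    by (simp add: E_0)
next
  case False
  then have "Re (E (\<bar>y\<bar> *\<^sub>R (of_real (sgn y) * \<i>))) > 0"
    by (intro Re_E_imaginary_pos) simp_all
  moreover have "\<bar>y\<bar> *\<^sub>R (of_real (sgn y) * \<i>) = \<i> * of_real y"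
    by (simp add: scaleR_conv_of_real abs_mult_sgn flip: of_real_mult)
  ultimately show ?thesis
    by auto
qed

end

lemma kummer_pair_hyp1F1:
  assumes b: "b = 2 * \<gamma> + 1" "b > 0"
  shows "kummer_pair \<gamma> b (hyp1F1 (of_real \<gamma>) (of_real b))
           (hyp1F1 (of_real (\<gamma> + 1)) (of_real (b + 1)))"
proof
  let ?u = "hyp1F1 (of_real \<gamma>) (of_real b)" and ?v = "hyp1F1 (of_real (\<gamma> + 1)) (of_real (b + 1))"
  show "(?u has_field_derivative of_real (\<gamma> / b) * ?v z) (at z)" for z
    using hyp1F1_has_field_derivative[OF b(2)] by simp
  show "?v holomorphic_on UNIV"
    using hyp1F1_has_field_derivative[of "b + 1" "\<gamma> + 1"] b
    by (auto simp: holomorphic_on_def field_differentiable_def)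
  show "z * deriv ?v z = of_real b * (?u z - ?v z) + z * ?v z" for z
  proof -
    have "z * deriv ?v z = of_real (\<gamma> + 1) * (hyp1F1 (of_real (\<gamma> + 2)) (of_real (b + 1)) z - ?v z)"
      using hyp1F1_euler_operator[of "b + 1" z "\<gamma> + 1"] b by (simp add: add.assoc)
    also have "\<dots> = of_real b * ?u z + (of_real (\<gamma> + 1 - b) + z) * ?v z - of_real (\<gamma> + 1) * ?v z"
      using hyp1F1_contiguous_ab[OF b(2), of \<gamma> z] by (simp add: algebra_simps)
    finally show ?thesis
      by (simp add: b(1) algebra_simps)
  qed
  show "?u 0 = 1"
    by (rule hyp1F1_0)
  show "?u (cnj z) = cnj (?u z)" for z
    using b(2) by (rule hyp1F1_cnj)
qed (use b in simp_all)

theorem lemma2p3: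
  fixes \<gamma> :: real and a :: real
  assumes "\<gamma> > - 1 / 2"
  shows "hyp1F1 (1 + of_real \<gamma>) (2 * of_real \<gamma> + 1) (- \<i> * of_real a)
           * hyp1F1 (2 + of_real \<gamma>) (2 * of_real \<gamma> + 2) (\<i> * of_real a) * (1 + of_real \<gamma>)
         - hyp1F1 (of_real \<gamma>) (2 * of_real \<gamma> + 1) (- \<i> * of_real a)
           * hyp1F1 (1 + of_real \<gamma>) (2 * of_real \<gamma> + 2) (\<i> * of_real a) * of_real \<gamma> \<noteq> 0"
proof -
  define b where "b = 2 * \<gamma> + 1"
  have b_pos: "b > 0"
    using assms by (simp add: b_def)
  define u where "u = hyp1F1 (of_real \<gamma>) (of_real b)"
  define v where "v = hyp1F1 (of_real (\<gamma> + 1)) (of_real (b + 1))"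
  interpret kummer_pair \<gamma> b u v
    unfolding u_def v_def by (rule kummer_pair_hyp1F1[OF b_def b_pos])
  define z where "z = \<i> * of_real a"
  have params: "1 + of_real \<gamma> = of_real (\<gamma> + 1)" "2 * of_real \<gamma> + 1 = of_real b"
    "2 + of_real \<gamma> = of_real (\<gamma> + 2)" "2 * of_real \<gamma> + 2 = of_real (b + 1)"
    by (simp_all add: b_def)
  have "hyp1F1 (of_real (\<gamma> + 1)) (of_real b) (- z) = u (- z) - z * v (- z) / of_real b"
    using hyp1F1_contiguous_a[OF b_pos, of \<gamma> "- z"] by (simp add: u_def v_def)
  moreover have "hyp1F1 (of_real (\<gamma> + 2)) (of_real (b + 1)) z * of_real (\<gamma> + 1)
      = of_real b * u z + (z - of_real \<gamma>) * v z"
    using hyp1F1_contiguous_ab[OF b_pos, of \<gamma> z] by (simp add: u_def v_def b_def algebra_simps)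
  ultimately have "hyp1F1 (1 + of_real \<gamma>) (2 * of_real \<gamma> + 1) (- z)
           * hyp1F1 (2 + of_real \<gamma>) (2 * of_real \<gamma> + 2) z * (1 + of_real \<gamma>)
         - hyp1F1 (of_real \<gamma>) (2 * of_real \<gamma> + 1) (- z)
           * hyp1F1 (1 + of_real \<gamma>) (2 * of_real \<gamma> + 2) z * of_real \<gamma> = E z"
    unfolding params E_def by (simp add: u_def v_def mult.assoc)
  then show ?thesis
    using E_imaginary_nonzero[of a] by (simp add: z_def)
qed

end
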